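(* Let $k\ge2$, let $\Pi$ be superweak $k$-coloring, let $\Pi'_1$ be the simplified derived problem of $\Pi$, and let $t$ be a non-negative integer. Let $\mathcal G$ be a graph class such that every graph in $\mathcal G$ is regular of degree at least $2^{4^k+1}$ and the input labels include an orientation of each edge. Set $k':=2^{2^{5^k}}$. If there is an algorithm (port numbering model) that solves $\Pi'_1$ on $\mathcal G$ in time $t$, then there is also an algorithm that solves superweak $k'$-coloring on $\mathcal G$ in time $t$.
   Context: All graphs are simple, undirected, connected; $B(G)$ is the set of pairs $(v,e)$ with $v$ an endpoint of edge $e$. Multisets ignore order; $2^S$ is the power set. Edge orientations are given as input labels encoded at both $(u,e)$ and $(v,e)$. Problems: $\Pi=(\mathcal O,f,g,h)$ with $f(\Delta)\subseteq\mathcal O$ finite, $g(\Delta)$ a set of 2-element multisets over $f(\Delta)$, $h(\Delta)$ a set of multisets of at most $\Delta$ elements of $f(\Delta)$. An algorithm solves $\Pi$ on a class if on each graph of max degree $\Delta$ it outputs $o_{v,e}\in f(\Delta)$ at each $(v,e)\in B(G)$ with $\{o_{u,e},o_{v,e}\}\in g(\Delta)$ for each edge $e=\{u,v\}$ and the multiset of outputs at each node in $h(\Delta)$. Model: port numbering model (nodes know $n,\Delta$ and the input labels at their ports; synchronous rounds; unbounded messages and computation); time $t$ means outputs at $v$ depend only on the radius-$t$ neighborhood of $v$. Superweak $k$-coloring: $f(\Delta)=\{1,\dots,k\}\times\{\rightarrow,\multimap,\bullet\}$ ($\rightarrow$ = demanding pointer, $\multimap$ = accepting pointer, $\bullet$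 = no pointer); $g(\Delta)$ = all $\{(y,y'),(z,z')\}$ with $y\ne z$, or $y'=z'=\bullet$, or $\multimap\in\{y',z'\}$; $h(\Delta)$ = all multisets $\{(y_1,y'_1),\dots,(y_\Delta,y'_\Delta)\}$ with $y_1=\dots=y_\Delta$, such that the number of $i$ with $y'_i=\rightarrow$ is strictly greater than the number of $i$ with $y'_i=\multimap$, and the number of $i$ with $y'_i=\multimap$ is at most $k$. Simplified derived problem: from $\Pi$ define $\Pi'_{1/2}$: $f_{1/2}(\Delta)=2^{f(\Delta)}$; $g'_{1/2}(\Delta)$ = all $\{Y,Z\}$ such that (P) $\{y,z\}\in g(\Delta)$ for all $y\in Y,z\in Z$, with each of $Y,Z$ inclusion-maximal subject to (P) (other fixed); $h_{1/2}(\Delta)$ = all $\{Y_1,\dots,Y_i\}$, $i\le\Delta$, with some $y_j\in Y_j$ satisfying $\{y_1,\dots,y_i\}\in h(\Delta)$. Then $\Pi'_1$: $f_1(\Delta)=2^{f_{1/2}(\Delta)}$; $g_1(\Delta)$ = all $\{Y,Z\}$ with some $y\in Y,z\in Z$ satisfying $\{y,z\}\in g'_{1/2}(\Delta)$; $h'_1(\Delta)$ = all $\{Y_1,\dots,Y_i\}$, $i\le\Delta$, such that (Q) $\{y_1,\dots,y_i\}\in h_{1/2}(\Delta)$ for all $y_j\in Y_j$, with each $Y_j$ inclusion-maximal subject to (Q) (others fixed). *)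

theory Defs
  imports Main "HOL-Library.Multiset"
begin

text \<open>Port i (0 \<le> i < deg v) of node v corresponds to the half-edge (v,e) of B(G);
  port G (v,i) = (u,j) means the edge at port i of v is attached to port j of u.
  inp G (v,i) is the input label at the half-edge (v,i).\<close>

record ('v, 'l) pgraph =
  verts :: "'v set"
  deg   :: "'v \<Rightarrow> nat"
  port  :: "'v \<times> nat \<Rightarrow> 'v \<times> nat"
  inp   :: "'v \<times> nat \<Rightarrow> 'l"

definition adj_rel :: "('v, 'l) pgraph \<Rightarrow> ('v \<times> 'v) set" where
  "adj_rel G = {(v, fst (port G (v, i))) | v i. v \<in> verts G \<and> i < deg G v}"

definition pn_graph :: "('v, 'l) pgraph \<Rightarrow> bool" where
  "pn_graph G \<longleftrightarrow>
     finite (verts G) \<and> verts G \<noteq> {} \<and>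
     (\<forall>v \<in> verts G. \<forall>i < deg G v.
        fst (port G (v, i)) \<in> verts G \<and>
        snd (port G (v, i)) < deg G (fst (port G (v, i))) \<and>
        port G (port G (v, i)) = (v, i) \<and>
        fst (port G (v, i)) \<noteq> v) \<and>
     (\<forall>v \<in> verts G. \<forall>i < deg G v. \<forall>j < deg G v.
        i \<noteq> j \<longrightarrow> fst (port G (v, i)) \<noteq> fst (port G (v, j))) \<and>
     (\<forall>u \<in> verts G. \<forall>w \<in> verts G. (u, w) \<in> (adj_rel G)\<^sup>*)"

definition maxdeg :: "('v, 'l) pgraph \<Rightarrow> nat" where
  "maxdeg G = Max (deg G ` verts G)"

definition num_nodes :: "('v, 'l) pgraph \<Rightarrow> nat" where
  "num_nodes G = card (verts G)"

text \<open>The radius-t view of a node in the port numbering model: the input labels at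
  its own ports, and for each port i (in port order) the port number at the far end
  together with the radius-(t-1) view of the neighbour. The degree is the length.\<close>
datatype 'l view = View "'l list" "(nat \<times> 'l view) list"

fun tview :: "('v, 'l) pgraph \<Rightarrow> nat \<Rightarrow> 'v \<Rightarrow> 'l view" where
  "tview G 0 v = View (map (\<lambda>i. inp G (v, i)) [0..<deg G v]) []"
| "tview G (Suc t) v = View (map (\<lambda>i. inp G (v, i)) [0..<deg G v])
      (map (\<lambda>i. (snd (port G (v, i)), tview G t (fst (port G (v, i))))) [0..<deg G v])"

text \<open>A time-t algorithm (nodes know n and \<Delta>; unbounded computation) is a map from
  (n, \<Delta>, radius-t view) to the outputs on the ports (indexed by port number).\<close>
type_synonym ('l, 'o) pn_alg = "nat \<Rightarrow> nat \<Rightarrow> 'l view \<Rightarrow> nat \<Rightarrow> 'o"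

definition alg_out :: "('l, 'o) pn_alg \<Rightarrow> nat \<Rightarrow> ('v, 'l) pgraph \<Rightarrow> 'v \<times> nat \<Rightarrow> 'o" where
  "alg_out A t G vi = A (num_nodes G) (maxdeg G) (tview G t (fst vi)) (snd vi)"

record 'o problem =
  outs  :: "nat \<Rightarrow> 'o set"
  edgec :: "nat \<Rightarrow> 'o multiset set"
  nodec :: "nat \<Rightarrow> 'o multiset set"

definition solves_with :: "'o problem \<Rightarrow> ('v, 'l) pgraph \<Rightarrow> ('v \<times> nat \<Rightarrow> 'o) \<Rightarrow> bool" where
  "solves_with P G out \<longleftrightarrow>
     (\<forall>v \<in> verts G. \<forall>i < deg G v. out (v, i) \<in> outs P (maxdeg G)) \<and>
     (\<forall>v \<in> verts G. \<forall>i < deg G v. {# out (v, i), out (port G (v, i)) #} \<in> edgec P (maxdeg G)) \<and>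
     (\<forall>v \<in> verts G. mset (map (\<lambda>i. out (v, i)) [0..<deg G v]) \<in> nodec P (maxdeg G))"

definition pn_solves :: "'o problem \<Rightarrow> ('v, 'l) pgraph set \<Rightarrow> ('l, 'o) pn_alg \<Rightarrow> nat \<Rightarrow> bool" where
  "pn_solves P Gs A t \<longleftrightarrow> (\<forall>G \<in> Gs. solves_with P G (alg_out A t G))"

definition f_half :: "'o problem \<Rightarrow> nat \<Rightarrow> 'o set set" where
  "f_half P D = Pow (outs P D)"

definition compat :: "'o problem \<Rightarrow> nat \<Rightarrow> 'o set \<Rightarrow> 'o set \<Rightarrow> bool" where
  "compat P D Y Z \<longleftrightarrow> (\<forall>y \<in> Y. \<forall>z \<in> Z. {#y, z#} \<in> edgec P D)"

definition g'_half :: "'o problem \<Rightarrow> nat \<Rightarrow> 'o set multiset set" where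
  "g'_half P D = {{#Y, Z#} | Y Z. Y \<in> f_half P D \<and> Z \<in> f_half P D \<and> compat P D Y Z \<and>
      (\<forall>Y'. Y \<subseteq> Y' \<and> Y' \<in> f_half P D \<and> compat P D Y' Z \<longrightarrow> Y' = Y) \<and>
      (\<forall>Z'. Z \<subseteq> Z' \<and> Z' \<in> f_half P D \<and> compat P D Y Z' \<longrightarrow> Z' = Z)}"

definition h_half :: "'o problem \<Rightarrow> nat \<Rightarrow> 'o set multiset set" where
  "h_half P D = {mset Ys | Ys. length Ys \<le> D \<and> set Ys \<subseteq> f_half P D \<and>
      (\<exists>ys. list_all2 (\<in>) ys Ys \<and> mset ys \<in> nodec P D)}"

definition f_one :: "'o problem \<Rightarrow> nat \<Rightarrow> 'o set set set" where
  "f_one P D = Pow (f_half P D)"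

definition g_one :: "'o problem \<Rightarrow> nat \<Rightarrow> 'o set set multiset set" where
  "g_one P D = {{#Y, Z#} | Y Z. Y \<in> f_one P D \<and> Z \<in> f_one P D \<and>
      (\<exists>y \<in> Y. \<exists>z \<in> Z. {#y, z#} \<in> g'_half P D)}"

definition allsel :: "'o problem \<Rightarrow> nat \<Rightarrow> 'o set set list \<Rightarrow> bool" where
  "allsel P D Ys \<longleftrightarrow> (\<forall>ys. list_all2 (\<in>) ys Ys \<longrightarrow> mset ys \<in> h_half P D)"

definition h'_one :: "'o problem \<Rightarrow> nat \<Rightarrow> 'o set set multiset set" where
  "h'_one P D = {mset Ys | Ys. length Ys \<le> D \<and> set Ys \<subseteq> f_one P D \<and> allsel P D Ys \<and>
      (\<forall>j < length Ys. \<forall>Y'. Ys ! j \<subseteq> Y' \<and> Y' \<in> f_one P D \<and> allsel P D (Ys[j := Y'])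
          \<longrightarrow> Y' = Ys ! j)}"

definition derived_one :: "'o problem \<Rightarrow> 'o set set problem" where
  "derived_one P = \<lparr> outs = f_one P, edgec = g_one P, nodec = h'_one P \<rparr>"

datatype ptr = Demand | Accept | NoPtr

definition superweak :: "nat \<Rightarrow> (nat \<times> ptr) problem" where
  "superweak k = \<lparr>
     outs = (\<lambda>D. {1..k} \<times> UNIV),
     edgec = (\<lambda>D. {{#(y, y'), (z, z')#} | y y' z z'.
                   y \<noteq> z \<or> (y' = NoPtr \<and> z' = NoPtr) \<or> y' = Accept \<or> z' = Accept}),
     nodec = (\<lambda>D. {M. size M = D \<and> set_mset M \<subseteq> {1..k} \<times> UNIV \<and>
                   (\<exists>c. \<forall>x \<in># M. fst x = c) \<and>
                   size (filter_mset (\<lambda>x. snd x = Demand) M) > size (filter_mset (\<lambda>x. snd x = Accept) M) \<and>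
                   size (filter_mset (\<lambda>x. snd x = Accept) M) \<le> k}) \<rparr>"

end

theory Submission
  imports Defs
begin

text \<open>
  Classify the ports of a node by the sets of labels their \<open>\<Pi>'\<^sub>1\<close> output offers (only sets
  containing all accepting labels matter) together with the orientation bit of their edge; there
  are at most \<open>N = 2^(4^k+1)\<close> classes. Two classes are related if they have opposite
  orientations and compatible label sets. A node looks for a \<^emph>\<open>witness\<close>: a set \<open>I\<close> of
  classes, disjoint from its neighbourhood \<open>nbhd I\<close>, such that fewer (and boundedly many) ports
  have a class in \<open>nbhd I\<close> than in \<open>I\<close>. It then outputs the colour \<open>I\<close>, demands on the ports of
  \<open>I\<close> and accepts on those of \<open>nbhd I\<close>; across an edge both ends have related classes, so this
  is a superweak colouring.

  A witness always exists: otherwise pick, by pigeonhole, a gap between "light" and "heavy"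
  class sizes. Hall's theorem matches the light ports into non-reserved ports of related
  classes (a violator of Hall's condition would be a witness), and the matching becomes an
  involution. Every heavy class has a heavy related class (else it is a witness alone), and
  reserves, for each class, a block of \<open>k + 1\<close> ports pointing back to it. Selecting labels
  along these links, every port is paired with a compatible port or has more than \<open>k\<close>
  compatible ports. The node constraint of \<open>\<Pi>'\<^sub>1\<close> turns this selection into a valid superweak
  \<open>k\<close>-configuration. There a demand forces an accept at every compatible port, so at most
  \<open>k\<close> ports are compatible with a demanding port; it is therefore paired, its mate accepts, and
  demands cannot outnumber accepts.
\<close>

section \<open>Hall's marriage theorem\<close>

definition hall_condition :: "'a set \<Rightarrow> ('a \<Rightarrow> 'b set) \<Rightarrow> bool" where
  "hall_condition D A \<longleftrightarrow> (\<forall>J\<subseteq>D. card J \<le> card (\<Union>(A ` J)))"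

lemma hall_condition_subset: "hall_condition D A \<Longrightarrow> J \<subseteq> D \<Longrightarrow> hall_condition J A"
  unfolding hall_condition_def by blast

lemma hall_condition_remove_point:
  assumes "finite D" "\<forall>j\<in>D. finite (A j)" "x \<in> D"
    and surplus: "\<forall>J\<subseteq>D. J \<noteq> {} \<longrightarrow> J \<noteq> D \<longrightarrow> card J < card (\<Union>(A ` J))"
  shows "hall_condition (D - {x}) (\<lambda>j. A j - {y})"
  unfolding hall_condition_def
proof (intro allI impI)
  fix J assume J: "J \<subseteq> D - {x}"
  show "card J \<le> card (\<Union>((\<lambda>j. A j - {y}) ` J))"
  proof (cases "J = {}")
    case False
    then have "card J < card (\<Union>(A ` J))" using surplus J \<open>x \<in> D\<close> by blast
    moreover have "card (\<Union>(A ` J)) - 1 \<le> card (\<Union>(A ` J) - {y})"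
      using diff_card_le_card_Diff[of "{y}"] by simp
    moreover have "\<Union>((\<lambda>j. A j - {y}) ` J) = \<Union>(A ` J) - {y}" by blast
    ultimately show ?thesis by simp
  qed simp
qed

lemma hall_condition_remove_tight:
  assumes "finite D" "\<forall>j\<in>D. finite (A j)" "hall_condition D A"
    and J: "J \<subseteq> D" "card (\<Union>(A ` J)) \<le> card J"
  shows "hall_condition (D - J) (\<lambda>j. A j - \<Union>(A ` J))"
  unfolding hall_condition_def
proof (intro allI impI)
  fix K assume K: "K \<subseteq> D - J"
  have fin: "finite K" "finite J" using K J \<open>finite D\<close> finite_subset by blast+
  have "card K + card J = card (K \<union> J)"
    using K fin by (intro card_Un_disjoint[symmetric]) auto
  also have "\<dots> \<le> card (\<Union>(A ` (K \<union> J)))"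
  proof -
    have "K \<union> J \<subseteq> D" using K J(1) by blast
    with \<open>hall_condition D A\<close> show ?thesis unfolding hall_condition_def by blast
  qed
  also have "\<Union>(A ` (K \<union> J)) = \<Union>((\<lambda>j. A j - \<Union>(A ` J)) ` K) \<union> \<Union>(A ` J)" by auto
  also have "card \<dots> \<le> card (\<Union>((\<lambda>j. A j - \<Union>(A ` J)) ` K)) + card (\<Union>(A ` J))"
    by (rule card_Un_le)
  finally show "card K \<le> card (\<Union>((\<lambda>j. A j - \<Union>(A ` J)) ` K))" using J(2) by linarith
qed

definition has_sdr :: "'a set \<Rightarrow> ('a \<Rightarrow> 'b set) \<Rightarrow> bool" where
  "has_sdr D A \<longleftrightarrow> (\<exists>f. inj_on f D \<and> (\<forall>j\<in>D. f j \<in> A j))"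

lemma has_sdr_insert:
  assumes "has_sdr (D - {x}) (\<lambda>j. A j - {y})" "x \<in> D" "y \<in> A x"
  shows "has_sdr D A"
proof -
  obtain g where g: "inj_on g (D - {x})" "\<forall>j\<in>D - {x}. g j \<in> A j - {y}"
    using assms(1) unfolding has_sdr_def by blast
  have "inj_on (g(x := y)) (insert x (D - {x}))" using g by (auto simp: inj_on_def)
  then show ?thesis
    unfolding has_sdr_def using g(2) assms(2,3)
    by (intro exI[of _ "g(x := y)"]) (auto simp: insert_absorb)
qed

lemma has_sdr_Un:
  assumes "has_sdr J A" "has_sdr (D - J) (\<lambda>j. A j - \<Union>(A ` J))" "J \<subseteq> D"
  shows "has_sdr D A"
proof -
  let ?B = "\<Union>(A ` J)"
  obtain g1 where g1: "inj_on g1 J" "\<forall>j\<in>J. g1 j \<in> A j"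
    using assms(1) unfolding has_sdr_def by blast
  obtain g2 where g2: "inj_on g2 (D - J)" "\<forall>j\<in>D - J. g2 j \<in> A j - ?B"
    using assms(2) unfolding has_sdr_def by blast
  let ?f = "\<lambda>j. if j \<in> J then g1 j else g2 j"
  have "inj_on ?f J" using g1(1) by (simp add: inj_on_def)
  moreover have "inj_on ?f (D - J)" using g2(1) by (simp add: inj_on_def)
  moreover have "?f ` J \<subseteq> ?B" using g1(2) by auto
  moreover have "?f ` (D - J) \<inter> ?B = {}" using g2(2) by auto
  ultimately have "inj_on ?f (J \<union> (D - J))" unfolding inj_on_Un by blast
  moreover have "J \<union> (D - J) = D" using assms(3) by blast
  ultimately show ?thesis unfolding has_sdr_def using g1(2) g2(2) by (intro exI[of _ ?f]) auto
qed

text \<open>Halmos and Vaughan's proof: if every proper subset has a surplus, match any element and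
  recurse; otherwise split off a tight subset.\<close>

theorem Hall_marriage:
  assumes "finite D" "\<forall>j\<in>D. finite (A j)" "hall_condition D A"
  shows "has_sdr D A"
  using assms
proof (induction "card D" arbitrary: D A rule: less_induct)
  case less
  consider "D = {}"
    | (surplus) "D \<noteq> {}" "\<forall>J\<subseteq>D. J \<noteq> {} \<longrightarrow> J \<noteq> D \<longrightarrow> card J < card (\<Union>(A ` J))"
    | (tight) J where "J \<subseteq> D" "J \<noteq> {}" "J \<noteq> D" "card (\<Union>(A ` J)) \<le> card J"
    using not_le by blast
  then show ?case
  proof cases
    case surplus
    then obtain x where x: "x \<in> D" by blast
    have "card {x} \<le> card (\<Union>(A ` {x}))"
      using less.prems(3) x unfolding hall_condition_def by blast
    then obtain y where y: "y \<in> A x" by fastforce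
    have "has_sdr (D - {x}) (\<lambda>j. A j - {y})"
    proof (rule less.hyps)
      show "card (D - {x}) < card D" using less.prems(1) x by (rule card_Diff1_less)
      show "hall_condition (D - {x}) (\<lambda>j. A j - {y})"
        using less.prems(1,2) x surplus(2) by (rule hall_condition_remove_point)
    qed (use less.prems(1,2) in simp_all)
    then show ?thesis using x y by (rule has_sdr_insert)
  next
    case tight
    have "has_sdr J A"
    proof (rule less.hyps)
      show "card J < card D" using tight(1,3) less.prems(1) by (meson psubsetI psubset_card_mono)
      show "hall_condition J A" using less.prems(3) tight(1) by (rule hall_condition_subset)
      show "finite J" using tight(1) less.prems(1) by (rule finite_subset)
    qed (use less.prems(2) tight(1) in blast)
    moreover have "has_sdr (D - J) (\<lambda>j. A j - \<Union>(A ` J))"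
    proof (rule less.hyps)
      show "card (D - J) < card D"
        using tight(1,2) less.prems(1) by (intro psubset_card_mono) blast+
      show "hall_condition (D - J) (\<lambda>j. A j - \<Union>(A ` J))"
        using less.prems tight(1,4) by (rule hall_condition_remove_tight)
    qed (use less.prems(1,2) in simp_all)
    ultimately show ?thesis using tight(1) by (rule has_sdr_Un)
  qed (simp add: has_sdr_def)
qed

section \<open>Matchings from injections\<close>

definition matching_involution :: "('a \<Rightarrow> 'a \<Rightarrow> bool) \<Rightarrow> 'a set \<Rightarrow> ('a \<Rightarrow> 'a) \<Rightarrow> bool" where
  "matching_involution R M mate \<longleftrightarrow> (\<forall>j\<in>M. mate j \<in> M \<and> mate (mate j) = j \<and> R j (mate j))"

lemma matching_involution_insert_pair:
  assumes "matching_involution R M mate" "a \<notin> M" "b \<notin> M" "a \<noteq> b" "R a b" "R b a"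
  shows "matching_involution R (insert a (insert b M)) (mate(a := b, b := a))"
  unfolding matching_involution_def
proof (intro ballI)
  let ?mate = "mate(a := b, b := a)"
  fix x assume x: "x \<in> insert a (insert b M)"
  show "?mate x \<in> insert a (insert b M) \<and> ?mate (?mate x) = x \<and> R x (?mate x)"
  proof (cases "x \<in> M")
    case True
    have m: "mate x \<in> M" "mate (mate x) = x" "R x (mate x)"
      using assms(1) True unfolding matching_involution_def by blast+
    have "?mate x = mate x" using True assms(2,3) by auto
    moreover have "?mate (mate x) = x" using m(1,2) assms(2,3) by auto
    ultimately show ?thesis using m(1,3) by simp
  next
    case False
    then have "x = a \<or> x = b" using x by auto
    then show ?thesis using assms(4-6) by (elim disjE) simp_all
  qed
qed

lemma matching_of_bipartite_permutation:
  assumes inj: "inj_on f D" and perm: "f ` D = D" and rel: "\<forall>j\<in>D. R j (f j)"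
    and sym: "\<And>x y. R x y \<Longrightarrow> R y x" and bip: "\<And>x y. R x y \<Longrightarrow> dr x \<longleftrightarrow> \<not> dr y"
  shows "\<exists>mate. matching_involution R D mate"
  unfolding matching_involution_def
proof (intro exI ballI)
  let ?mate = "\<lambda>j. if dr j then f j else the_inv_into D f j"
  fix j assume j: "j \<in> D"
  show "?mate j \<in> D \<and> ?mate (?mate j) = j \<and> R j (?mate j)"
  proof (cases "dr j")
    case True
    have "R j (f j)" using rel j by blast
    then have "\<not> dr (f j)" using bip True by blast
    then show ?thesis using True \<open>R j (f j)\<close> j perm the_inv_into_f_f[OF inj j] by auto
  next
    case False
    let ?i = "the_inv_into D f j"
    have j_img: "j \<in> f ` D" using j perm by simp
    have i: "?i \<in> D" "f ?i = j"
      using the_inv_into_into[OF inj j_img] f_the_inv_into_f[OF inj j_img] by auto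
    then have "R ?i j" using rel by metis
    then have "dr ?i" using bip False by blast
    then show ?thesis using False i sym[OF \<open>R ?i j\<close>] by auto
  qed
qed

text \<open>If the elements of \<open>D\<close> not hit by \<open>f\<close> are paired with their images first, what remains
  is a permutation, whose cycles are even because \<open>R\<close> is bipartite.\<close>

lemma matching_from_injection:
  assumes "finite D" "inj_on f D" "\<forall>j\<in>D. R j (f j)"
    and sym: "\<And>x y. R x y \<Longrightarrow> R y x" and bip: "\<And>x y. R x y \<Longrightarrow> dr x \<longleftrightarrow> \<not> dr y"
  shows "\<exists>mate M. D \<subseteq> M \<and> M \<subseteq> D \<union> f ` D \<and> matching_involution R M mate"
  using assms(1-3)
proof (induction "card D" arbitrary: D rule: less_induct)
  case less
  show ?case
  proof (cases "D \<subseteq> f ` D")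
    case True
    have "f ` D = D"
      using card_subset_eq[OF finite_imageI[OF less.prems(1)] True] card_image[OF less.prems(2)]
      by simp
    from matching_of_bipartite_permutation[of f D R dr, OF less.prems(2) this less.prems(3) sym bip]
    show ?thesis by blast
  next
    case False
    then obtain j where j: "j \<in> D" "j \<notin> f ` D" by blast
    let ?p = "f j" and ?D' = "D - {j, f j}"
    have "R j ?p" using less.prems(3) j(1) by blast
    then have "j \<noteq> ?p" using bip[OF \<open>R j ?p\<close>] by auto
    have "?D' \<subset> D" using j(1) by auto
    then have "card ?D' < card D" by (rule psubset_card_mono[OF less.prems(1)])
    moreover have "finite ?D'" using less.prems(1) by (rule finite_Diff)
    moreover have "inj_on f ?D'" using less.prems(2) by (rule inj_on_subset) auto
    moreover have "\<forall>x\<in>?D'. R x (f x)" using less.prems(3) by auto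
    ultimately have "\<exists>mate M. ?D' \<subseteq> M \<and> M \<subseteq> ?D' \<union> f ` ?D' \<and> matching_involution R M mate"
      by (rule less.hyps)
    then obtain mate M where M: "?D' \<subseteq> M" "M \<subseteq> ?D' \<union> f ` ?D'" "matching_involution R M mate"
      by blast
    have "j \<notin> M" using M(2) j(2) by auto
    have "?p \<notin> f ` ?D'"
    proof
      assume "?p \<in> f ` ?D'"
      then obtain x where x: "f j = f x" "x \<in> ?D'" by (rule imageE)
      then have "x = j" using inj_onD[OF less.prems(2) x(1)[symmetric]] j(1) by simp
      then show False using x(2) by simp
    qed
    then have "?p \<notin> M" using M(2) by auto
    have "matching_involution R (insert j (insert ?p M)) (mate(j := ?p, ?p := j))"
      using M(3) \<open>j \<notin> M\<close> \<open>?p \<notin> M\<close> \<open>j \<noteq> ?p\<close> \<open>R j ?p\<close> sym[OF \<open>R j ?p\<close>]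
      by (rule matching_involution_insert_pair)
    moreover have "D \<subseteq> insert j (insert ?p M)" using M(1) by auto
    moreover have "insert j (insert ?p M) \<subseteq> D \<union> f ` D" using M(2) j(1) by auto
    ultimately show ?thesis by blast
  qed
qed

section \<open>Threshold bands\<close>

fun threshold :: "nat \<Rightarrow> nat \<Rightarrow> nat \<Rightarrow> nat" where
  "threshold N k 0 = 0"
| "threshold N k (Suc i) = N * (threshold N k i + k + 1)"

lemma threshold_mono:
  assumes "i \<le> j" shows "threshold N k i \<le> threshold N k j"
proof (rule lift_Suc_mono_le[OF _ assms])
  fix n show "threshold N k n \<le> threshold N k (Suc n)"
  proof (cases "N = 0")
    case True then show ?thesis by (cases n) simp_all
  next
    case False
    then have "1 * (threshold N k n + k + 1) \<le> N * (threshold N k n + k + 1)"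
      by (intro mult_le_mono1) simp
    then show ?thesis by simp
  qed
qed

lemma threshold_le: "threshold N k i \<le> (k + 1) * (2 * N) ^ i"
proof (induction i)
  case (Suc i)
  let ?X = "(k + 1) * (2 * N) ^ i"
  show ?case
  proof (cases "N = 0")
    case False
    have "(k + 1) * 1 \<le> ?X" using False by (intro mult_le_mono2) simp
    have "threshold N k (Suc i) = N * (threshold N k i + (k + 1))" by simp
    also have "\<dots> \<le> N * (?X + ?X)"
      using Suc.IH \<open>(k + 1) * 1 \<le> ?X\<close> by (intro mult_le_mono2 add_mono) simp_all
    also have "\<dots> = (k + 1) * (2 * N) ^ Suc i" by (simp add: algebra_simps)
    finally show ?thesis .
  qed simp
qed simp

lemma empty_threshold_band:
  assumes "finite U" "card U \<le> N"
  shows "\<exists>i\<le>N. \<forall>a\<in>U. \<not> (threshold N k i \<le> m a \<and> m a < threshold N k (Suc i))"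
proof (rule ccontr)
  assume "\<not> ?thesis"
  then obtain g where
    g: "\<forall>i\<le>N. g i \<in> U \<and> threshold N k i \<le> m (g i) \<and> m (g i) < threshold N k (Suc i)"
    by metis
  have "strict_mono_on {..N} (m \<circ> g)"
  proof (rule strict_mono_onI)
    fix i j assume "i \<in> {..N}" "j \<in> {..N}" "i < j"
    then have "m (g i) < threshold N k (Suc i)" "threshold N k j \<le> m (g j)"
      "threshold N k (Suc i) \<le> threshold N k j" using g threshold_mono[of "Suc i" j] by auto
    then show "(m \<circ> g) i < (m \<circ> g) j" by simp
  qed
  then have "inj_on g {..N}" by (metis inj_on_imageI2 strict_mono_on_imp_inj_on)
  then have "card {..N} \<le> card U" using g assms(1) by (intro card_inj_on_le) auto
  then show False using assms(2) by simp
qed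

section \<open>Port classes and witnesses\<close>

definition paired_or_crowded ::
    "nat \<Rightarrow> nat \<Rightarrow> ('y \<Rightarrow> 'y \<Rightarrow> bool) \<Rightarrow> (nat \<Rightarrow> 'y) \<Rightarrow> (nat \<Rightarrow> nat) \<Rightarrow> bool" where
  "paired_or_crowded k d cp sel mate \<longleftrightarrow> (\<forall>j<d.
     (mate j < d \<and> mate (mate j) = j \<and> cp (sel j) (sel (mate j))) \<or>
     k + 1 \<le> card {q. q < d \<and> cp (sel j) (sel q)})"

text \<open>The ports \<open>0..<d\<close> of one node: port \<open>j\<close> has class \<open>cls j\<close>, a class \<open>a\<close> offers the
  labels \<open>R a\<close> and has orientation \<open>dr a\<close>, and \<open>cp\<close> is compatibility of labels.\<close>

locale port_classes =
  fixes d :: nat and cls :: "nat \<Rightarrow> 'c" and R :: "'c \<Rightarrow> 'y set"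
    and dr :: "'c \<Rightarrow> bool" and cp :: "'y \<Rightarrow> 'y \<Rightarrow> bool"
  assumes cp_commute: "cp y z \<Longrightarrow> cp z y"
begin

definition related :: "'c \<Rightarrow> 'c \<Rightarrow> bool" where
  "related a b \<longleftrightarrow> (dr a \<longleftrightarrow> \<not> dr b) \<and> (\<exists>y\<in>R a. \<exists>z\<in>R b. cp y z)"

definition nbhd :: "'c set \<Rightarrow> 'c set" where
  "nbhd I = {b. \<exists>a\<in>I. related a b}"

definition ports_of :: "'c set \<Rightarrow> nat set" where
  "ports_of X = {j. j < d \<and> cls j \<in> X}"

text \<open>With a witness \<open>I\<close> a node demands on the ports of \<open>I\<close> and accepts on those of
  \<open>nbhd I\<close>.\<close>

definition witness :: "nat \<Rightarrow> 'c set \<Rightarrow> bool" where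
  "witness K I \<longleftrightarrow> I \<inter> nbhd I = {} \<and>
     card (ports_of (nbhd I)) < card (ports_of I) \<and> card (ports_of (nbhd I)) \<le> K"

definition rank :: "nat \<Rightarrow> nat" where
  "rank p = card {q. q < p \<and> cls q = cls p}"

definition link_pair :: "'c \<Rightarrow> 'c \<Rightarrow> 'y \<times> 'y" where
  "link_pair a b = (SOME p. fst p \<in> R a \<and> snd p \<in> R b \<and> cp (fst p) (snd p))"

text \<open>Both ends of a link between related classes read their label off the same pair,
  the one chosen by the end with \<open>dr\<close> set.\<close>

definition link_label :: "'c \<Rightarrow> 'c \<Rightarrow> 'y" where
  "link_label a b = (if dr a then fst (link_pair a b) else snd (link_pair b a))"

lemma related_commute: "related a b \<Longrightarrow> related b a"
  unfolding related_def using cp_commute by blast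

lemma not_related_self: "\<not> related a a"
  unfolding related_def by simp

lemma link_pair:
  assumes "\<exists>y\<in>R a. \<exists>z\<in>R b. cp y z"
  shows "fst (link_pair a b) \<in> R a \<and> snd (link_pair a b) \<in> R b \<and>
    cp (fst (link_pair a b)) (snd (link_pair a b))"
proof -
  from assms have "\<exists>p. fst p \<in> R a \<and> snd p \<in> R b \<and> cp (fst p) (snd p)" by auto
  then show ?thesis unfolding link_pair_def by (rule someI_ex)
qed

lemma link_label:
  assumes "related a b"
  shows "link_label a b \<in> R a \<and> cp (link_label a b) (link_label b a)"
proof (cases "dr a")
  case True
  with assms have "\<not> dr b" "\<exists>y\<in>R a. \<exists>z\<in>R b. cp y z" unfolding related_def by auto
  with True show ?thesis using link_pair[of a b] unfolding link_label_def by simp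
next
  case False
  with assms have "dr b" "\<exists>y\<in>R b. \<exists>z\<in>R a. cp y z"
    unfolding related_def using cp_commute by blast+
  with False show ?thesis using link_pair[of b a] cp_commute unfolding link_label_def by simp
qed

lemma nbhd_disjoint_if_one_sided:
  assumes "\<forall>a\<in>I. dr a = \<delta>"
  shows "I \<inter> nbhd I = {}"
  using assms unfolding nbhd_def related_def by auto

lemma rank_less: "p \<in> ports_of {b} \<Longrightarrow> rank p < card (ports_of {b})"
  unfolding rank_def ports_of_def by (rule psubset_card_mono) auto

lemma rank_strict_mono: "p < p' \<Longrightarrow> cls p = cls p' \<Longrightarrow> rank p < rank p'"
  unfolding rank_def by (rule psubset_card_mono) auto

lemma bij_betw_rank: "bij_betw rank (ports_of {b}) {..<card (ports_of {b})}"
proof -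
  have "strict_mono_on (ports_of {b}) rank"
    by (rule strict_mono_onI) (auto simp: ports_of_def intro: rank_strict_mono)
  then have inj: "inj_on rank (ports_of {b})" by (rule strict_mono_on_imp_inj_on)
  moreover have "rank ` ports_of {b} \<subseteq> {..<card (ports_of {b})}" using rank_less by auto
  moreover have "card (rank ` ports_of {b}) = card {..<card (ports_of {b})}"
    using card_image[OF inj] by simp
  ultimately show ?thesis unfolding bij_betw_def using card_subset_eq by blast
qed

lemma card_ports_with_rank:
  assumes "X \<subseteq> {..<card (ports_of {b})}"
  shows "card {p \<in> ports_of {b}. rank p \<in> X} = card X"
proof -
  have "rank ` ports_of {b} = {..<card (ports_of {b})}"
    using bij_betw_rank by (simp add: bij_betw_def)
  then have "rank ` {p \<in> ports_of {b}. rank p \<in> X} = X" using assms by auto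
  then have "bij_betw rank {p \<in> ports_of {b}. rank p \<in> X} X"
    by (intro bij_betw_subset[OF bij_betw_rank[of b]]) auto
  then show ?thesis by (rule bij_betw_same_card)
qed

lemma card_ports_of_classes:
  assumes "finite U" "\<forall>j<d. cls j \<in> U" "\<And>a. a \<in> U \<Longrightarrow> Q a \<Longrightarrow> card (ports_of {a}) \<le> t"
  shows "card {j. j < d \<and> Q (cls j)} \<le> card U * t"
proof -
  have "{j. j < d \<and> Q (cls j)} = (\<Union>a\<in>{a\<in>U. Q a}. ports_of {a})"
    using assms(2) unfolding ports_of_def by auto
  then have "card {j. j < d \<and> Q (cls j)} \<le> (\<Sum>a\<in>{a\<in>U. Q a}. card (ports_of {a}))"
    using card_UN_le[of "{a\<in>U. Q a}" "\<lambda>a. ports_of {a}"] assms(1) by simp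
  also have "\<dots> \<le> (\<Sum>a\<in>{a\<in>U. Q a}. t)" using assms(3) by (intro sum_mono) auto
  also have "\<dots> \<le> card U * t" using assms(1) by (simp add: card_mono mult_le_mono1)
  finally show ?thesis .
qed

end

section \<open>Selections in the absence of a witness\<close>

text \<open>No class size lies in the band, so there are at most \<open>N * threshold N k i\<close> light
  ports; a heavy class has that many non-reserved ports plus \<open>(k + 1) * N\<close> reserved ones, a
  block of \<open>k + 1\<close> for each class.\<close>

locale no_witness_band = port_classes d cls R dr cp
  for d :: nat and cls :: "nat \<Rightarrow> 'c" and R :: "'c \<Rightarrow> 'y set" and dr cp +
  fixes U :: "'c set" and N k K i :: nat
  assumes finite_U: "finite U" and card_U: "card U \<le> N" and N_pos: "0 < N"
    and cls_in_U: "j < d \<Longrightarrow> cls j \<in> U"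
    and K_ge: "N * threshold N k N \<le> K"
    and no_witness: "I \<subseteq> U \<Longrightarrow> \<not> witness K I"
    and i_le: "i \<le> N"
    and band_empty: "a \<in> U \<Longrightarrow>
      \<not> (threshold N k i \<le> card (ports_of {a}) \<and> card (ports_of {a}) < threshold N k (Suc i))"
begin

definition heavy :: "'c \<Rightarrow> bool" where
  "heavy a \<longleftrightarrow> threshold N k (Suc i) \<le> card (ports_of {a})"

definition light_ports :: "nat set" where
  "light_ports = {j. j < d \<and> \<not> heavy (cls j)}"

definition reserved :: "nat \<Rightarrow> bool" where
  "reserved p \<longleftrightarrow> heavy (cls p) \<and> rank p < (k + 1) * N"

definition candidates :: "nat \<Rightarrow> nat set" where
  "candidates j = {p. p < d \<and> \<not> reserved p \<and> related (cls j) (cls p)}"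

lemma ports_of_outside_U: "a \<notin> U \<Longrightarrow> ports_of {a} = {}"
  unfolding ports_of_def using cls_in_U by auto

lemma threshold_Suc_i: "threshold N k (Suc i) = N * threshold N k i + N * (k + 1)"
  by (simp add: algebra_simps)

lemma light_class_small: "\<not> heavy a \<Longrightarrow> card (ports_of {a}) \<le> threshold N k i"
  using band_empty[of a] ports_of_outside_U[of a] unfolding heavy_def
  by (cases "a \<in> U") auto

lemma heavy_in_U:
  assumes "heavy a" shows "a \<in> U"
proof (rule ccontr)
  assume "a \<notin> U"
  then have "card (ports_of {a}) = 0" using ports_of_outside_U by simp
  moreover have "0 < threshold N k (Suc i)" using N_pos by simp
  ultimately show False using assms unfolding heavy_def by simp
qed

lemma small_le_K: "N * threshold N k i \<le> K"
  using K_ge threshold_mono[OF i_le, of N k] by (meson mult_le_mono2 order_trans)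

lemma card_light_ports: "card light_ports \<le> N * threshold N k i"
proof -
  have "card light_ports \<le> card U * threshold N k i"
    unfolding light_ports_def using finite_U cls_in_U light_class_small
    by (intro card_ports_of_classes) auto
  also have "\<dots> \<le> N * threshold N k i" using card_U by (rule mult_le_mono1)
  finally show ?thesis .
qed

lemma card_ports_of_light_classes:
  assumes "\<forall>b\<in>X. \<not> heavy b"
  shows "card (ports_of X) \<le> N * threshold N k i"
proof -
  have "ports_of X \<subseteq> light_ports" using assms unfolding ports_of_def light_ports_def by auto
  then have "card (ports_of X) \<le> card light_ports"
    by (rule card_mono[rotated]) (simp add: light_ports_def)
  with card_light_ports show ?thesis by linarith
qed

lemma heavy_has_heavy_neighbour:
  assumes "heavy a"
  shows "\<exists>b. heavy b \<and> related a b"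
proof (rule ccontr)
  assume "\<nexists>b. heavy b \<and> related a b"
  then have "card (ports_of (nbhd {a})) \<le> N * threshold N k i"
    by (intro card_ports_of_light_classes) (auto simp: nbhd_def)
  moreover have "N * threshold N k i < card (ports_of {a})"
    using assms N_pos unfolding heavy_def threshold_Suc_i by simp
  moreover have "{a} \<inter> nbhd {a} = {}" using not_related_self by (auto simp: nbhd_def)
  ultimately have "witness K {a}" unfolding witness_def using small_le_K by simp
  then show False using no_witness heavy_in_U[OF assms] by blast
qed

lemma heavy_neighbour_many_candidates:
  assumes "heavy b" "related (cls j) b"
  shows "N * threshold N k i \<le> card (candidates j)"
proof -
  let ?X = "{(k + 1) * N..<card (ports_of {b})}"
  have "{p \<in> ports_of {b}. rank p \<in> ?X} \<subseteq> candidates j"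
    using assms(2) unfolding candidates_def reserved_def ports_of_def by auto
  then have "card {p \<in> ports_of {b}. rank p \<in> ?X} \<le> card (candidates j)"
    by (rule card_mono[rotated]) (simp add: candidates_def)
  moreover have "card {p \<in> ports_of {b}. rank p \<in> ?X} = card ?X"
    by (rule card_ports_with_rank) auto
  moreover have "N * threshold N k i + (k + 1) * N \<le> card (ports_of {b})"
    using assms(1) unfolding heavy_def threshold_Suc_i by (simp add: algebra_simps)
  ultimately show ?thesis by simp
qed

lemma finite_Union_candidates: "finite (\<Union>(candidates ` J))"
proof -
  have "\<Union>(candidates ` J) \<subseteq> {..<d}" unfolding candidates_def by auto
  then show ?thesis by (rule finite_subset) simp
qed

lemma hall_condition_one_side:
  assumes J: "J \<subseteq> light_ports" "\<forall>j\<in>J. dr (cls j) = \<delta>"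
  shows "card J \<le> card (\<Union>(candidates ` J))"
proof (rule ccontr)
  assume "\<not> ?thesis"
  then have few: "card (\<Union>(candidates ` J)) < card J" by simp
  have card_J: "card J \<le> N * threshold N k i"
    using card_light_ports card_mono[OF _ J(1)] by (force simp: light_ports_def)
  let ?I = "cls ` J"
  have light_nbhd: "\<forall>b\<in>nbhd ?I. \<not> heavy b"
  proof (intro ballI notI)
    fix b assume "b \<in> nbhd ?I" "heavy b"
    then obtain j where "j \<in> J" "related (cls j) b" unfolding nbhd_def by auto
    then have "N * threshold N k i \<le> card (\<Union>(candidates ` J))"
      using heavy_neighbour_many_candidates[OF \<open>heavy b\<close>] finite_Union_candidates
      by (meson UN_upper card_mono order_trans)
    then show False using few card_J by linarith
  qed
  have "\<Union>(candidates ` J) = ports_of (nbhd ?I)"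
    using light_nbhd unfolding candidates_def ports_of_def nbhd_def reserved_def by auto
  moreover have "card J \<le> card (ports_of ?I)"
    using J(1) by (intro card_mono) (auto simp: ports_of_def light_ports_def)
  moreover have "?I \<inter> nbhd ?I = {}"
    by (rule nbhd_disjoint_if_one_sided[of _ \<delta>]) (use J(2) in auto)
  ultimately have "witness K ?I"
    unfolding witness_def using few card_ports_of_light_classes[OF light_nbhd] small_le_K by simp
  moreover have "?I \<subseteq> U" using J(1) cls_in_U unfolding light_ports_def by auto
  ultimately show False using no_witness by blast
qed

lemma hall_condition_light_ports: "hall_condition light_ports candidates"
  unfolding hall_condition_def
proof (intro allI impI)
  fix J assume J: "J \<subseteq> light_ports"
  let ?J1 = "{j\<in>J. dr (cls j)}" and ?J2 = "{j\<in>J. \<not> dr (cls j)}"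
  have "finite J" using J by (rule finite_subset) (simp add: light_ports_def)
  have "card J = card (?J1 \<union> ?J2)" by (rule arg_cong[where f=card]) auto
  also have "\<dots> = card ?J1 + card ?J2" using \<open>finite J\<close> by (intro card_Un_disjoint) auto
  also have "\<dots> \<le> card (\<Union>(candidates ` ?J1)) + card (\<Union>(candidates ` ?J2))"
    using J by (intro add_mono hall_condition_one_side) auto
  also have "\<dots> = card (\<Union>(candidates ` ?J1) \<union> \<Union>(candidates ` ?J2))"
    by (rule card_Un_disjoint[symmetric, OF finite_Union_candidates finite_Union_candidates])
      (auto simp: candidates_def related_def)
  also have "\<Union>(candidates ` ?J1) \<union> \<Union>(candidates ` ?J2) = \<Union>(candidates ` J)" by auto
  finally show "card J \<le> card (\<Union>(candidates ` J))" .
qed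

lemma light_ports_matching:
  "\<exists>mate M. light_ports \<subseteq> M \<and> (\<forall>j\<in>M. j < d \<and> \<not> reserved j) \<and>
     matching_involution (\<lambda>x y. related (cls x) (cls y)) M mate"
proof -
  have fin: "finite light_ports" unfolding light_ports_def by simp
  have "\<forall>j\<in>light_ports. finite (candidates j)" unfolding candidates_def by simp
  from Hall_marriage[OF fin this hall_condition_light_ports, unfolded has_sdr_def]
  obtain f where f: "inj_on f light_ports" "\<forall>j\<in>light_ports. f j \<in> candidates j" by blast
  have rel: "\<forall>j\<in>light_ports. related (cls j) (cls (f j))"
    using f(2) unfolding candidates_def by blast
  have bip: "related (cls x) (cls y) \<Longrightarrow> dr (cls x) \<longleftrightarrow> \<not> dr (cls y)" for x y
    unfolding related_def by blast
  from matching_from_injection[of light_ports f "\<lambda>x y. related (cls x) (cls y)" "\<lambda>x. dr (cls x)",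
      OF fin f(1) rel related_commute bip]
  obtain mate M where M: "light_ports \<subseteq> M" "M \<subseteq> light_ports \<union> f ` light_ports"
    "matching_involution (\<lambda>x y. related (cls x) (cls y)) M mate"
    by blast
  have "j < d \<and> \<not> reserved j" if "j \<in> M" for j
    using M(2) that f(2) unfolding light_ports_def candidates_def reserved_def by auto
  then show ?thesis using M(1,3) by blast
qed

definition enum_U :: "'c list" where
  "enum_U = (SOME xs. set xs = U \<and> distinct xs)"

lemma enum_U: "set enum_U = U" "length enum_U \<le> N"
proof -
  have "set enum_U = U \<and> distinct enum_U"
    unfolding enum_U_def using finite_distinct_list[OF finite_U] by (rule someI_ex)
  then show "set enum_U = U" "length enum_U \<le> N" using distinct_card card_U by metis+
qed

definition owner :: "nat \<Rightarrow> 'c" where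
  "owner p = enum_U ! (rank p div (k + 1))"

definition target :: "nat \<Rightarrow> 'c" where
  "target p = (if reserved p \<and> heavy (owner p) \<and> related (cls p) (owner p) then owner p
               else (SOME b. heavy b \<and> related (cls p) b))"

lemma target: "heavy (cls p) \<Longrightarrow> heavy (target p) \<and> related (cls p) (target p)"
  unfolding target_def using someI_ex[OF heavy_has_heavy_neighbour] by auto

lemma reserved_block:
  assumes "heavy a" "heavy b" "related a b"
  shows "\<exists>Q. card Q = k + 1 \<and> (\<forall>q\<in>Q. q < d \<and> cls q = b \<and> reserved q \<and> target q = a)"
proof -
  obtain n where n: "n < length enum_U" "enum_U ! n = a"
    using heavy_in_U[OF assms(1)] enum_U(1) by (metis in_set_conv_nth)
  let ?X = "{(k + 1) * n..<(k + 1) * Suc n}"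
  have "Suc n \<le> N" using n(1) enum_U(2) by simp
  then have block_le: "(k + 1) * Suc n \<le> (k + 1) * N" by (rule mult_le_mono2)
  also have "\<dots> \<le> card (ports_of {b})"
    using assms(2) unfolding heavy_def threshold_Suc_i by (simp add: algebra_simps)
  finally have "card {q \<in> ports_of {b}. rank q \<in> ?X} = k + 1"
    by (subst card_ports_with_rank) auto
  moreover have "q < d \<and> cls q = b \<and> reserved q \<and> target q = a"
    if "q \<in> ports_of {b}" "rank q \<in> ?X" for q
  proof -
    have q: "q < d" "cls q = b" using that(1) unfolding ports_of_def by auto
    have "rank q < (k + 1) * N" using that(2) block_le by simp
    then have "reserved q" using assms(2) q(2) unfolding reserved_def by simp
    moreover have "rank q div (k + 1) = n" using that(2) by (intro div_nat_eqI) auto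
    then have "owner q = a" using n(2) unfolding owner_def by simp
    ultimately show ?thesis using q assms related_commute unfolding target_def by auto
  qed
  ultimately show ?thesis by (intro exI[of _ "{q \<in> ports_of {b}. rank q \<in> ?X}"]) blast
qed

lemma selection:
  "\<exists>sel mate. (\<forall>j<d. sel j \<in> R (cls j)) \<and> paired_or_crowded k d cp sel mate"
proof -
  obtain mate M where "light_ports \<subseteq> M" "\<forall>j\<in>M. j < d \<and> \<not> reserved j"
    "matching_involution (\<lambda>x y. related (cls x) (cls y)) M mate"
    using light_ports_matching by blast
  then have M: "light_ports \<subseteq> M"
    "\<forall>j\<in>M. j < d \<and> \<not> reserved j \<and> mate j \<in> M \<and> mate (mate j) = j \<and> related (cls j) (cls (mate j))"
    unfolding matching_involution_def by auto
  define sel where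
    "sel p = (if p \<in> M then link_label (cls p) (cls (mate p))
              else link_label (cls p) (target p))" for p
  have heavy_unmatched: "heavy (cls j)" if "j < d" "j \<notin> M" for j
    using that M(1) unfolding light_ports_def by auto
  have matched: "mate j < d \<and> mate (mate j) = j \<and> sel j \<in> R (cls j) \<and> cp (sel j) (sel (mate j))"
    if "j \<in> M" for j
    using M(2) that link_label[of "cls j" "cls (mate j)"] unfolding sel_def by auto
  have unmatched: "sel j \<in> R (cls j) \<and> k + 1 \<le> card {q. q < d \<and> cp (sel j) (sel q)}"
    if "j < d" "j \<notin> M" for j
  proof -
    let ?a = "cls j" and ?b = "target j"
    have ab: "heavy ?a" "heavy ?b" "related ?a ?b" using heavy_unmatched[OF that] target by auto
    then obtain Q where Q: "card Q = k + 1" "\<forall>q\<in>Q. q < d \<and> cls q = ?b \<and> reserved q \<and> target q = ?a"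
      using reserved_block by blast
    have sel_Q: "sel q = link_label ?b ?a" if "q \<in> Q" for q
      using Q(2) M(2) that unfolding sel_def by auto
    have sel_j: "sel j = link_label ?a ?b" using \<open>j \<notin> M\<close> unfolding sel_def by simp
    have "Q \<subseteq> {q. q < d \<and> cp (sel j) (sel q)}"
      using Q(2) sel_Q sel_j link_label[OF ab(3)] by auto
    then have "card Q \<le> card {q. q < d \<and> cp (sel j) (sel q)}" by (rule card_mono[rotated]) simp
    then show ?thesis using Q(1) sel_j link_label[OF ab(3)] by simp
  qed
  show ?thesis unfolding paired_or_crowded_def
    by (rule exI[of _ sel], rule exI[of _ mate]) (use matched unmatched in blast)
qed

end

lemma (in port_classes) selection_without_witness:
  assumes "finite U" "card U \<le> N" "0 < N" "\<forall>j<d. cls j \<in> U" "N * threshold N k N \<le> K"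
    and "\<nexists>I. I \<subseteq> U \<and> witness K I"
  shows "\<exists>sel mate. (\<forall>j<d. sel j \<in> R (cls j)) \<and> paired_or_crowded k d cp sel mate"
proof -
  obtain i where "i \<le> N" "\<forall>a\<in>U. \<not> (threshold N k i \<le> card (ports_of {a}) \<and>
      card (ports_of {a}) < threshold N k (Suc i))"
    using empty_threshold_band[of U N k "\<lambda>a. card (ports_of {a})", OF assms(1,2)] by blast
  then interpret no_witness_band d cls R dr cp U N k K i
    using assms by unfold_locales auto
  show ?thesis by (rule selection)
qed

section \<open>Derived problems\<close>

lemma add_mset_doubleton_eq_iff:
  "{#a, b#} = {#c, d#} \<longleftrightarrow> (a = c \<and> b = d) \<or> (a = d \<and> b = c)"
  by (auto simp: add_eq_conv_ex)

lemma size_filter_mset_map_upt: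
  "size (filter_mset P (mset (map f [0..<d]))) = card {j. j < d \<and> P (f j)}"
proof -
  have "size (filter_mset P (mset (map f [0..<d]))) = length (filter P (map f [0..<d]))"
    by (metis mset_filter size_mset)
  also have "\<dots> = card {j. j < d \<and> P (f j)}"
    unfolding length_filter_conv_card by (rule arg_cong[where f = card]) auto
  finally show ?thesis .
qed

lemma list_all2_reorder_right:
  assumes "list_all2 P xs ys" "mset ys' = mset ys"
  shows "\<exists>xs'. list_all2 P xs' ys' \<and> mset xs' = mset xs"
proof -
  have "list_all2 (\<lambda>y x. P x y) ys xs" using assms(1) by (simp add: list_all2_conv_all_nth)
  from list_all2_reorder_left_invariance[OF this assms(2)]
  obtain xs' where "list_all2 (\<lambda>y x. P x y) ys' xs'" "mset xs' = mset xs" by blast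
  then show ?thesis by (auto simp: list_all2_conv_all_nth)
qed

lemma compat_commute: "compat P D Y Z \<longleftrightarrow> compat P D Z Y"
  unfolding compat_def by (metis add_mset_commute)

lemma port_classes_compat: "port_classes (compat P D)"
  unfolding port_classes_def using compat_commute by blast

lemma h'_one_selection:
  assumes "mset (map out [0..<d]) \<in> h'_one P D" and "\<forall>j<d. sel j \<in> out j"
  shows "\<exists>l. (\<forall>j<d. l j \<in> sel j) \<and> mset (map l [0..<d]) \<in> nodec P D"
proof -
  obtain Ys where Ys: "mset (map out [0..<d]) = mset Ys" "allsel P D Ys"
    using assms(1) unfolding h'_one_def by blast
  have "list_all2 (\<in>) (map sel [0..<d]) (map out [0..<d])"
    using assms(2) by (simp add: list_all2_conv_all_nth)
  then obtain ss where "list_all2 (\<in>) ss Ys" "mset ss = mset (map sel [0..<d])"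
    using list_all2_reorder_right Ys(1)[symmetric] by blast
  then have "mset (map sel [0..<d]) \<in> h_half P D" using Ys(2) unfolding allsel_def by metis
  then obtain Ys' ls where Ys': "mset (map sel [0..<d]) = mset Ys'" "list_all2 (\<in>) ls Ys'"
    "mset ls \<in> nodec P D"
    unfolding h_half_def by blast
  obtain ls' where ls': "list_all2 (\<in>) ls' (map sel [0..<d])" "mset ls' = mset ls"
    using list_all2_reorder_right[OF Ys'(2) Ys'(1)] by blast
  have "length ls' = d" using ls'(1) by (simp add: list_all2_lengthD)
  then have "map (\<lambda>j. ls' ! j) [0..<d] = ls'" using map_nth[of ls'] by simp
  moreover have "\<forall>j<d. ls' ! j \<in> sel j" using ls'(1) by (auto simp: list_all2_conv_all_nth)
  ultimately show ?thesis using ls'(2) Ys'(3) by (intro exI[of _ "\<lambda>j. ls' ! j"]) simp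
qed

section \<open>Superweak colouring\<close>

lemma superweak_edge_iff:
  "{#a, b#} \<in> edgec (superweak k) D \<longleftrightarrow>
     fst a \<noteq> fst b \<or> (snd a = NoPtr \<and> snd b = NoPtr) \<or> snd a = Accept \<or> snd b = Accept"
  unfolding superweak_def by (cases a; cases b) (auto simp: add_mset_doubleton_eq_iff)

lemma outs_superweak: "outs (superweak k) D = {1..k} \<times> UNIV"
  by (simp add: superweak_def)

lemma nodec_superweak: "M \<in> nodec (superweak k) D \<longleftrightarrow>
    size M = D \<and> set_mset M \<subseteq> {1..k} \<times> UNIV \<and> (\<exists>c. \<forall>x\<in>#M. fst x = c) \<and>
    size (filter_mset (\<lambda>x. snd x = Accept) M) < size (filter_mset (\<lambda>x. snd x = Demand) M) \<and>
    size (filter_mset (\<lambda>x. snd x = Accept) M) \<le> k"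
  by (simp add: superweak_def)

lemma demand_forces_accept:
  assumes "compat (superweak k) D Y Z" "a \<in> Y" "b \<in> Z" "fst a = fst b" "snd a = Demand"
  shows "snd b = Accept"
proof -
  have "{#a, b#} \<in> edgec (superweak k) D" using assms(1-3) unfolding compat_def by blast
  then show ?thesis using assms(4,5) unfolding superweak_edge_iff by auto
qed

lemma no_superweak_labelling:
  assumes l: "\<forall>j<d. l j \<in> sel j" and valid: "mset (map l [0..<d]) \<in> nodec (superweak k) D"
    and sel: "paired_or_crowded k d (compat (superweak k) D) sel mate"
  shows False
proof -
  let ?M = "mset (map l [0..<d])" and ?cp = "compat (superweak k) D"
  define Dm where "Dm = {j. j < d \<and> snd (l j) = Demand}"
  define Ac where "Ac = {j. j < d \<and> snd (l j) = Accept}"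
  obtain c where c: "\<forall>x\<in>#?M. fst x = c"
    and "size (filter_mset (\<lambda>x. snd x = Accept) ?M) < size (filter_mset (\<lambda>x. snd x = Demand) ?M)"
    and "size (filter_mset (\<lambda>x. snd x = Accept) ?M) \<le> k"
    using valid unfolding superweak_def by auto
  then have few_accepts: "card Ac < card Dm" "card Ac \<le> k"
    unfolding Dm_def Ac_def size_filter_mset_map_upt by auto
  have accept: "q \<in> Ac" if "j \<in> Dm" "q < d" "?cp (sel j) (sel q)" for j q
  proof -
    have "l j \<in> sel j" "l q \<in> sel q" "fst (l j) = fst (l q)" "snd (l j) = Demand"
      using l c that(1,2) unfolding Dm_def by auto
    with demand_forces_accept[OF that(3)] show ?thesis using that(2) unfolding Ac_def by blast
  qed
  have paired: "mate j \<in> Ac \<and> mate (mate j) = j" if "j \<in> Dm" for j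
  proof -
    have "{q. q < d \<and> ?cp (sel j) (sel q)} \<subseteq> Ac" using accept[OF that] by blast
    then have "card {q. q < d \<and> ?cp (sel j) (sel q)} \<le> card Ac"
      by (rule card_mono[rotated]) (simp add: Ac_def)
    then have "\<not> k + 1 \<le> card {q. q < d \<and> ?cp (sel j) (sel q)}" using few_accepts(2) by linarith
    moreover have "j < d" using that unfolding Dm_def by simp
    ultimately have "mate j < d" "mate (mate j) = j" "?cp (sel j) (sel (mate j))"
      using sel unfolding paired_or_crowded_def by auto
    then show ?thesis using accept[OF that] by blast
  qed
  have "inj_on mate Dm" by (rule inj_onI) (metis paired)
  then have "card Dm \<le> card Ac" using paired by (intro card_inj_on_le) (auto simp: Ac_def)
  with few_accepts(1) show False by linarith
qed

text \<open>Accepting labels are compatible with everything, so the maximal sets of \<open>g'_half\<close>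
  contain them all.\<close>

definition accepting_sets :: "nat \<Rightarrow> (nat \<times> ptr) set set" where
  "accepting_sets k = {y. y \<subseteq> {1..k} \<times> UNIV \<and> {1..k} \<times> {Accept} \<subseteq> y}"

lemma compat_superweak_insert_accepting:
  assumes "compat (superweak k) D Y Z"
  shows "compat (superweak k) D (Y \<union> {1..k} \<times> {Accept}) Z"
  unfolding compat_def
proof (intro ballI)
  fix y z assume y: "y \<in> Y \<union> {1..k} \<times> {Accept}" and z: "z \<in> Z"
  show "{#y, z#} \<in> edgec (superweak k) D"
  proof (cases "y \<in> Y")
    case True
    then show ?thesis using assms z unfolding compat_def by blast
  next
    case False
    then have "snd y = Accept" using y by auto
    then show ?thesis by (simp add: superweak_edge_iff)
  qed
qed

lemma f_half_superweak: "f_half (superweak k) D = Pow ({1..k} \<times> UNIV)"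
  unfolding f_half_def superweak_def by simp

lemma g'_half_superweak:
  assumes "{#y, z#} \<in> g'_half (superweak k) D"
  shows "y \<in> accepting_sets k \<and> z \<in> accepting_sets k \<and> compat (superweak k) D y z"
proof -
  let ?P = "superweak k" and ?Acc = "{1..k} \<times> {Accept}"
  obtain Y Z where yz: "{#y, z#} = {#Y, Z#}"
    and Y: "Y \<subseteq> {1..k} \<times> UNIV" and Z: "Z \<subseteq> {1..k} \<times> UNIV" and cYZ: "compat ?P D Y Z"
    and max_Y: "\<forall>Y'. Y \<subseteq> Y' \<and> Y' \<in> f_half ?P D \<and> compat ?P D Y' Z \<longrightarrow> Y' = Y"
    and max_Z: "\<forall>Z'. Z \<subseteq> Z' \<and> Z' \<in> f_half ?P D \<and> compat ?P D Y Z' \<longrightarrow> Z' = Z"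
    using assms unfolding g'_half_def f_half_superweak by auto
  have "compat ?P D (Y \<union> ?Acc) Z" using cYZ by (rule compat_superweak_insert_accepting)
  then have "Y \<union> ?Acc = Y" using max_Y[rule_format, of "Y \<union> ?Acc"] Y
    unfolding f_half_superweak by blast
  moreover have "compat ?P D (Z \<union> ?Acc) Y"
    using cYZ compat_commute compat_superweak_insert_accepting by metis
  then have "Z \<union> ?Acc = Z" using max_Z[rule_format, of "Z \<union> ?Acc"] Z compat_commute
    unfolding f_half_superweak by blast
  ultimately have "Y \<in> accepting_sets k" "Z \<in> accepting_sets k"
    using Y Z unfolding accepting_sets_def by blast+
  moreover from yz have "(y = Y \<and> z = Z) \<or> (y = Z \<and> z = Y)" by (simp add: add_mset_doubleton_eq_iff)
  ultimately show ?thesis using cYZ compat_commute by blast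
qed

lemma g_one_superweak:
  assumes "{#Y, Z#} \<in> g_one (superweak k) D"
  shows "\<exists>y\<in>Y \<inter> accepting_sets k. \<exists>z\<in>Z \<inter> accepting_sets k. compat (superweak k) D y z"
proof -
  obtain Y' Z' y z where Y'Z': "{#Y, Z#} = {#Y', Z'#}" "y \<in> Y'" "z \<in> Z'"
    and "{#y, z#} \<in> g'_half (superweak k) D"
    using assms unfolding g_one_def by blast
  then have "y \<in> accepting_sets k" "z \<in> accepting_sets k" "compat (superweak k) D y z"
    using g'_half_superweak by blast+
  moreover from Y'Z'(1) have "(Y = Y' \<and> Z = Z') \<or> (Y = Z' \<and> Z = Y')"
    by (simp add: add_mset_doubleton_eq_iff)
  ultimately show ?thesis using Y'Z'(2,3) compat_commute by blast
qed

lemma accepting_sets_eq: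
  "accepting_sets k = (\<lambda>w. {1..k} \<times> {Accept} \<union> w) ` Pow ({1..k} \<times> {Demand, NoPtr})"
proof (intro equalityI subsetI)
  fix y assume y: "y \<in> accepting_sets k"
  have "y = {1..k} \<times> {Accept} \<union> (y \<inter> {1..k} \<times> {Demand, NoPtr})"
  proof (intro equalityI subsetI)
    fix x assume "x \<in> y"
    with y show "x \<in> {1..k} \<times> {Accept} \<union> (y \<inter> {1..k} \<times> {Demand, NoPtr})"
      unfolding accepting_sets_def by (cases "snd x") auto
  qed (use y in \<open>auto simp: accepting_sets_def\<close>)
  then show "y \<in> (\<lambda>w. {1..k} \<times> {Accept} \<union> w) ` Pow ({1..k} \<times> {Demand, NoPtr})" by blast
qed (auto simp: accepting_sets_def)

lemma finite_accepting_sets: "finite (accepting_sets k)"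
  unfolding accepting_sets_eq by simp

lemma card_accepting_sets: "card (accepting_sets k) \<le> 4 ^ k"
proof -
  have "card (accepting_sets k) \<le> card (Pow ({1..k} \<times> {Demand, NoPtr}))"
    unfolding accepting_sets_eq by (rule card_image_le) simp
  also have "\<dots> = 2 ^ (2 * k)" by (simp add: card_Pow card_cartesian_product mult_2)
  also have "\<dots> = 4 ^ k" by (simp add: power_mult)
  finally show ?thesis .
qed

lemma four_pow_le_five_pow: "2 \<le> k \<Longrightarrow> 4 ^ k + 2 * k + 2 \<le> (5::nat) ^ k"
proof (induction k rule: dec_induct)
  case (step n)
  have "4 ^ Suc n + 2 * Suc n + 2 \<le> 5 * (4 ^ n + 2 * n + 2)" by simp
  also have "\<dots> \<le> 5 * 5 ^ n" using step.IH by simp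
  finally show ?case by simp
qed simp

lemma threshold_bound_le_tower:
  assumes "2 \<le> k"
  shows "(2::nat) ^ (4 ^ k + 1) * threshold (2 ^ (4 ^ k + 1)) k (2 ^ (4 ^ k + 1)) \<le> 2 ^ 2 ^ 5 ^ k"
proof -
  define m :: nat where "m = 4 ^ k + 1"
  define N :: nat where "N = 2 ^ m"
  have four: "(4::nat) ^ k = 2 ^ (2 * k)" by (simp add: power_mult)
  have "k + 1 \<le> 2 ^ k" using less_exp[of k] by (simp add: Suc_le_eq)
  also have "(2::nat) ^ k \<le> 2 ^ m" unfolding m_def four
    by (intro power_increasing) (use less_exp[of "2 * k"] in linarith, simp)
  finally have kN: "k + 1 \<le> N" unfolding N_def .
  have mN: "m \<le> N" using less_exp[of m] unfolding N_def by simp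
  have "N * threshold N k N \<le> N * ((k + 1) * (2 * N) ^ N)" by (intro mult_le_mono2 threshold_le)
  also have "\<dots> \<le> N * (N * (2 * N) ^ N)" using kN by (intro mult_le_mono2 mult_le_mono1)
  also have "\<dots> = 2 ^ (m + m + (m + 1) * N)"
    unfolding N_def by (simp add: power_add power_mult[symmetric] algebra_simps)
  also have "\<dots> \<le> 2 ^ 2 ^ 5 ^ k"
  proof (rule power_increasing)
    have "(4::nat) \<le> 4 ^ k" using power_increasing[of 1 k "4::nat"] assms by simp
    then have "m + 3 \<le> 2 * 4 ^ k" unfolding m_def by simp
    also have "\<dots> = 2 ^ (2 * k + 1)" using four by simp
    finally have "m + 3 \<le> 2 ^ (2 * k + 1)" .
    have "m + m + (m + 1) * N \<le> (m + 3) * N" using mN by (simp add: algebra_simps)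
    also have "\<dots> \<le> 2 ^ (2 * k + 1) * 2 ^ m"
      unfolding N_def using \<open>m + 3 \<le> 2 ^ (2 * k + 1)\<close> by (rule mult_le_mono1)
    also have "\<dots> = 2 ^ (4 ^ k + 2 * k + 2)" unfolding m_def by (simp add: power_add[symmetric])
    also have "\<dots> \<le> 2 ^ 5 ^ k"
      by (rule power_increasing) (use four_pow_le_five_pow[OF assms] in simp_all)
    finally show "m + m + (m + 1) * N \<le> 2 ^ 5 ^ k" .
  qed simp
  finally show ?thesis unfolding N_def m_def .
qed

section \<open>The derived algorithm\<close>

definition class_universe :: "nat \<Rightarrow> ((nat \<times> ptr) set set \<times> bool) set" where
  "class_universe k = Pow (accepting_sets k) \<times> UNIV"

lemma finite_class_universe: "finite (class_universe k)"
  unfolding class_universe_def using finite_accepting_sets by simp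

lemma card_class_universe: "card (class_universe k) \<le> 2 ^ (4 ^ k + 1)"
proof -
  have "card (class_universe k) = 2 ^ card (accepting_sets k) * 2"
    unfolding class_universe_def using finite_accepting_sets
    by (simp add: card_cartesian_product card_Pow)
  also have "\<dots> \<le> 2 ^ 4 ^ k * 2"
    using card_accepting_sets by (intro mult_le_mono1 power_increasing) simp_all
  finally show ?thesis by simp
qed

lemma card_Pow_class_universe:
  assumes "2 \<le> k" shows "card (Pow (class_universe k)) \<le> 2 ^ 2 ^ 5 ^ k"
proof -
  have "card (Pow (class_universe k)) \<le> 2 ^ 2 ^ (4 ^ k + 1)"
    using card_class_universe finite_class_universe by (simp add: card_Pow power_increasing)
  also have "\<dots> \<le> 2 ^ 2 ^ 5 ^ k"
    using four_pow_le_five_pow[OF assms] by (intro power_increasing) simp_all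
  finally show ?thesis .
qed

fun view_inputs :: "'l view \<Rightarrow> 'l list" where
  "view_inputs (View xs _) = xs"

lemma view_inputs_tview: "view_inputs (tview G t v) = map (\<lambda>i. inp G (v, i)) [0..<deg G v]"
  by (cases t) simp_all

definition port_class :: "nat \<Rightarrow> ('l \<Rightarrow> bool) \<Rightarrow> ('l, (nat \<times> ptr) set set) pn_alg \<Rightarrow>
    nat \<Rightarrow> nat \<Rightarrow> 'l view \<Rightarrow> nat \<Rightarrow> (nat \<times> ptr) set set \<times> bool" where
  "port_class k orient A n D w j = (A n D w j \<inter> accepting_sets k, orient (view_inputs w ! j))"

definition chosen_witness :: "nat \<Rightarrow> ('l \<Rightarrow> bool) \<Rightarrow> ('l, (nat \<times> ptr) set set) pn_alg \<Rightarrow>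
    nat \<Rightarrow> nat \<Rightarrow> nat \<Rightarrow> 'l view \<Rightarrow> ((nat \<times> ptr) set set \<times> bool) set" where
  "chosen_witness k orient A K n D w = (SOME I. I \<subseteq> class_universe k \<and>
     port_classes.witness (length (view_inputs w)) (port_class k orient A n D w) fst snd
       (compat (superweak k) D) K I)"

definition witness_alg :: "nat \<Rightarrow> ('l \<Rightarrow> bool) \<Rightarrow> ('l, (nat \<times> ptr) set set) pn_alg \<Rightarrow>
    nat \<Rightarrow> (((nat \<times> ptr) set set \<times> bool) set \<Rightarrow> nat) \<Rightarrow> ('l, nat \<times> ptr) pn_alg" where
  "witness_alg k orient A K enc n D w i =
     (let I = chosen_witness k orient A K n D w; c = port_class k orient A n D w i
      in (enc I + 1,
          if c \<in> I then Demand
          else if c \<in> port_classes.nbhd fst snd (compat (superweak k) D) I then Accept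
          else NoPtr))"

locale derived_solution =
  fixes k :: nat and orient :: "'l \<Rightarrow> bool" and A :: "('l, (nat \<times> ptr) set set) pn_alg"
    and t :: nat and G :: "('v, 'l) pgraph"
    and K :: nat and enc :: "((nat \<times> ptr) set set \<times> bool) set \<Rightarrow> nat"
  assumes graph: "pn_graph G"
    and regular: "v \<in> verts G \<Longrightarrow> deg G v = maxdeg G"
    and oriented: "v \<in> verts G \<Longrightarrow> i < deg G v \<Longrightarrow>
      orient (inp G (v, i)) \<noteq> orient (inp G (port G (v, i)))"
    and solves: "solves_with (derived_one (superweak k)) G (alg_out A t G)"
    and K_large: "2 ^ (4 ^ k + 1) * threshold (2 ^ (4 ^ k + 1)) k (2 ^ (4 ^ k + 1)) \<le> K"
    and enc_inj: "inj_on enc (Pow (class_universe k))"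
    and enc_less: "I \<subseteq> class_universe k \<Longrightarrow> enc I < K"
begin

abbreviation "out \<equiv> alg_out A t G"
abbreviation "out' \<equiv> alg_out (witness_alg k orient A K enc) t G"
abbreviation "cp \<equiv> compat (superweak k) (maxdeg G)"
abbreviation "related \<equiv> port_classes.related fst snd cp"
abbreviation "nbhd \<equiv> port_classes.nbhd fst snd cp"

definition cls :: "'v \<Rightarrow> nat \<Rightarrow> (nat \<times> ptr) set set \<times> bool" where
  "cls v = port_class k orient A (num_nodes G) (maxdeg G) (tview G t v)"

definition node_witness :: "'v \<Rightarrow> ((nat \<times> ptr) set set \<times> bool) set" where
  "node_witness v = chosen_witness k orient A K (num_nodes G) (maxdeg G) (tview G t v)"

lemma cls_eq: "j < deg G v \<Longrightarrow> cls v j = (out (v, j) \<inter> accepting_sets k, orient (inp G (v, j)))"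
  unfolding cls_def port_class_def alg_out_def view_inputs_tview by simp

lemma cls_in_universe: "v \<in> verts G \<Longrightarrow> j < maxdeg G \<Longrightarrow> cls v j \<in> class_universe k"
  using cls_eq regular unfolding class_universe_def by auto

lemma witness_exists:
  assumes v: "v \<in> verts G"
  shows "\<exists>I. I \<subseteq> class_universe k \<and> port_classes.witness (maxdeg G) (cls v) fst snd cp K I"
proof (rule ccontr)
  assume no_witness: "\<not> ?thesis"
  have "\<forall>j<maxdeg G. cls v j \<in> class_universe k" using cls_in_universe[OF v] by blast
  from port_classes.selection_without_witness[where d = "maxdeg G" and cls = "cls v" and R = fst
      and dr = snd, OF port_classes_compat[of "superweak k" "maxdeg G"] finite_class_universe
      card_class_universe _ this K_large] no_witness
  obtain sel mate where sel: "\<forall>j<maxdeg G. sel j \<in> fst (cls v j)"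
    "paired_or_crowded k (maxdeg G) cp sel mate"
    by auto
  have "mset (map (\<lambda>j. out (v, j)) [0..<maxdeg G]) \<in> h'_one (superweak k) (maxdeg G)"
    using solves v regular[OF v] unfolding solves_with_def derived_one_def by auto
  moreover have "\<forall>j<maxdeg G. sel j \<in> out (v, j)" using sel(1) cls_eq regular[OF v] by auto
  ultimately obtain l where "\<forall>j<maxdeg G. l j \<in> sel j"
    "mset (map l [0..<maxdeg G]) \<in> nodec (superweak k) (maxdeg G)"
    using h'_one_selection by blast
  then show False using no_superweak_labelling sel(2) by blast
qed

lemma node_witness:
  assumes "v \<in> verts G"
  shows "node_witness v \<subseteq> class_universe k \<and>
    port_classes.witness (maxdeg G) (cls v) fst snd cp K (node_witness v)"
proof -
  have "length (view_inputs (tview G t v)) = maxdeg G"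
    using regular[OF assms] by (simp add: view_inputs_tview)
  then show ?thesis using someI_ex[OF witness_exists[OF assms]]
    unfolding node_witness_def chosen_witness_def cls_def by simp
qed

lemma alg_out_witness_alg:
  "out' (v, i) = (enc (node_witness v) + 1,
     if cls v i \<in> node_witness v then Demand
     else if cls v i \<in> nbhd (node_witness v) then Accept else NoPtr)"
  unfolding alg_out_def witness_alg_def node_witness_def cls_def by (simp add: Let_def)

lemma node_witness_facts:
  assumes "v \<in> verts G"
  shows "node_witness v \<inter> nbhd (node_witness v) = {}"
    and "card {j. j < maxdeg G \<and> cls v j \<in> nbhd (node_witness v)} <
      card {j. j < maxdeg G \<and> cls v j \<in> node_witness v}"
    and "card {j. j < maxdeg G \<and> cls v j \<in> nbhd (node_witness v)} \<le> K"
  using node_witness[OF assms] unfolding port_classes.witness_def[OF port_classes_compat]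
    port_classes.ports_of_def[OF port_classes_compat] by auto

lemma related_across_edge:
  assumes "v \<in> verts G" "i < deg G v" "port G (v, i) = (u, j)"
  shows "related (cls v i) (cls u j)"
proof -
  have "j < deg G u" using graph assms unfolding pn_graph_def by (metis snd_conv fst_conv)
  have "{#out (v, i), out (port G (v, i))#} \<in> edgec (derived_one (superweak k)) (maxdeg G)"
    using solves assms(1,2) unfolding solves_with_def by blast
  then have "{#out (v, i), out (u, j)#} \<in> g_one (superweak k) (maxdeg G)"
    using assms(3) by (simp add: derived_one_def)
  then obtain y z where
    "y \<in> out (v, i) \<inter> accepting_sets k" "z \<in> out (u, j) \<inter> accepting_sets k" "cp y z"
    using g_one_superweak by blast
  moreover have "orient (inp G (v, i)) \<noteq> orient (inp G (u, j))" using oriented assms by metis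
  ultimately show ?thesis
    unfolding port_classes.related_def[OF port_classes_compat]
    using cls_eq[OF assms(2)] cls_eq[OF \<open>j < deg G u\<close>] by auto
qed

lemma edge_constraint:
  assumes "v \<in> verts G" "i < deg G v"
  shows "{#out' (v, i), out' (port G (v, i))#} \<in> edgec (superweak K) (maxdeg G)"
proof -
  obtain u j where uj: "port G (v, i) = (u, j)" by fastforce
  have u: "u \<in> verts G" using graph assms uj unfolding pn_graph_def by (metis fst_conv)
  have rel: "related (cls v i) (cls u j)" using related_across_edge[OF assms uj] .
  then have rel': "related (cls u j) (cls v i)"
    by (rule port_classes.related_commute[OF port_classes_compat])
  show ?thesis
  proof (cases "node_witness v = node_witness u")
    case False
    then have "enc (node_witness v) \<noteq> enc (node_witness u)"
      using enc_inj node_witness[OF assms(1)] node_witness[OF u] unfolding inj_on_def by blast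
    then show ?thesis unfolding uj alg_out_witness_alg superweak_edge_iff by simp
  next
    case True
    have "cls u j \<in> nbhd (node_witness v) \<and> cls u j \<notin> node_witness v"
      if "cls v i \<in> node_witness v"
      using that rel node_witness_facts(1)[OF u] True
      unfolding port_classes.nbhd_def[OF port_classes_compat] by blast
    moreover have "cls v i \<in> nbhd (node_witness v) \<and> cls v i \<notin> node_witness v"
      if "cls u j \<in> node_witness v"
      using that rel' node_witness_facts(1)[OF assms(1)]
      unfolding port_classes.nbhd_def[OF port_classes_compat] by blast
    ultimately show ?thesis unfolding uj alg_out_witness_alg superweak_edge_iff using True by auto
  qed
qed

lemma node_constraint:
  assumes "v \<in> verts G"
  shows "mset (map (\<lambda>i. out' (v, i)) [0..<deg G v]) \<in> nodec (superweak K) (maxdeg G)"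
proof -
  let ?M = "mset (map (\<lambda>i. out' (v, i)) [0..<maxdeg G])"
  have "size (filter_mset (\<lambda>x. snd x = Demand) ?M) =
      card {j. j < maxdeg G \<and> cls v j \<in> node_witness v}"
    unfolding size_filter_mset_map_upt alg_out_witness_alg by (rule arg_cong[where f = card]) auto
  moreover have "size (filter_mset (\<lambda>x. snd x = Accept) ?M) =
      card {j. j < maxdeg G \<and> cls v j \<in> nbhd (node_witness v)}"
    unfolding size_filter_mset_map_upt alg_out_witness_alg using node_witness_facts(1)[OF assms]
    by (intro arg_cong[where f = card]) auto
  moreover have "enc (node_witness v) < K" using enc_less node_witness[OF assms] by blast
  ultimately show ?thesis
    unfolding regular[OF assms] nodec_superweak using node_witness_facts(2,3)[OF assms]
    by (auto simp: alg_out_witness_alg)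
qed

theorem solves_superweak: "solves_with (superweak K) G out'"
proof -
  have "out' (v, i) \<in> outs (superweak K) (maxdeg G)" if "v \<in> verts G" for v i
  proof -
    have "enc (node_witness v) < K" using enc_less node_witness[OF that] by blast
    then show ?thesis by (simp add: alg_out_witness_alg outs_superweak)
  qed
  then show ?thesis unfolding solves_with_def using edge_constraint node_constraint by blast
qed

end

theorem lemma7:
  fixes k t :: nat
    and Gs :: "('v, 'l) pgraph set"
    and orient :: "'l \<Rightarrow> bool"
    and A :: "('l, (nat \<times> ptr) set set) pn_alg"
  assumes "k \<ge> 2"
    and "\<forall>G \<in> Gs. pn_graph G"
    and "\<forall>G \<in> Gs. \<forall>v \<in> verts G. deg G v = maxdeg G"
    and "\<forall>G \<in> Gs. maxdeg G \<ge> 2 ^ (4 ^ k + 1)"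
    and "\<forall>G \<in> Gs. \<forall>v \<in> verts G. \<forall>i < deg G v.
           orient (inp G (v, i)) \<noteq> orient (inp G (port G (v, i)))"
    and "pn_solves (derived_one (superweak k)) Gs A t"
  shows "\<exists>A' :: ('l, nat \<times> ptr) pn_alg.
           pn_solves (superweak (2 ^ (2 ^ (5 ^ k)))) Gs A' t"
proof -
  let ?K = "2 ^ 2 ^ 5 ^ k :: nat" and ?U = "class_universe k"
  have card_le: "card (Pow ?U) \<le> ?K" using assms(1) by (rule card_Pow_class_universe)
  obtain enc where enc: "bij_betw enc (Pow ?U) {0..<card (Pow ?U)}"
    using ex_bij_betw_finite_nat finite_class_universe by blast
  have "derived_solution k orient A t G ?K enc" if "G \<in> Gs" for G
  proof
    show "inj_on enc (Pow ?U)" using enc by (rule bij_betw_imp_inj_on)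
    show "enc I < ?K" if "I \<subseteq> ?U" for I
    proof -
      have "enc I < card (Pow ?U)" using bij_betwE[OF enc] that by auto
      with card_le show ?thesis by linarith
    qed
  qed (use assms \<open>G \<in> Gs\<close> threshold_bound_le_tower[OF assms(1)] in \<open>auto simp: pn_solves_def\<close>)
  then have "pn_solves (superweak ?K) Gs (witness_alg k orient A ?K enc) t"
    unfolding pn_solves_def using derived_solution.solves_superweak by blast
  then show ?thesis by blast
qed

end
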